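(* Let $f(z)=z+\sum_{n\ge 2}a_nz^n\in\mathcal{BT}_{\mathfrak{B}}$ and let $\Gamma_1,\Gamma_2$ be its logarithmic inverse coefficients. Then $$-\frac{1}{2\sqrt{29}}\le|\Gamma_2|-|\Gamma_1|\le\frac1{12}.$$ Both inequalities are sharp: the upper bound is attained by $f_2(z)=\int_0^z\sqrt{1+\tanh(t^2)}\,dt$, and the lower bound by the function $f$ with $f(0)=0$, $f'(z)=\sqrt{1+\tanh(\omega(z))}$, where $\omega=\frac{p-1}{p+1}$ and $p(z)=\dfrac{1+\frac{8}{\sqrt{29}}z+z^2}{1-z^2}$.
   Context: $\mathbb{D}=\{z\in\mathbb{C}:|z|<1\}$. $\mathcal{S}$ is the class of univalent analytic functions $f$ on $\mathbb{D}$ normalized by $f(0)=0$, $f'(0)=1$, i.e. $f(z)=z+\sum_{n\ge2}a_nz^n$. For analytic $g,h$ on $\mathbb{D}$, $g\prec h$ means there is an analytic $\omega:\mathbb{D}\to\mathbb{D}$ with $\omega(0)=0$ and $g=h\circ\omega$. Let $\mathfrak{B}(z)=\sqrt{1+\tanh z}$ (principal branch, $\mathfrak{B}(0)=1$). The class $\mathcal{BT}_{\mathfrak{B}}$ is $\{f\in\mathcal{S}: f'(z)\prec \mathfrak{B}(z)\}$. The logarithmic inverse coefficients $\Gamma_n$ are defined by $\log\frac{f^{-1}(w)}{w}=2\sum_{n\ge1}\Gamma_n w^n$ near $w=0$; explicitly $\Gamma_1=-\tfrac12a_2$, $\Gamma_2=-\tfrac12(a_3-\tfrac32a_2^2)$.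 *)

theory Defs
  imports "HOL-Complex_Analysis.Complex_Analysis"
begin

definition class_S :: "(complex \<Rightarrow> complex) set" where
  "class_S = {f. f holomorphic_on ball 0 1 \<and> inj_on f (ball 0 1) \<and> f 0 = 0 \<and> deriv f 0 = 1}"

definition subordinate :: "(complex \<Rightarrow> complex) \<Rightarrow> (complex \<Rightarrow> complex) \<Rightarrow> bool" where
  "subordinate g h \<longleftrightarrow> (\<exists>\<omega>. \<omega> holomorphic_on ball 0 1 \<and> \<omega> ` ball 0 1 \<subseteq> ball 0 1 \<and> \<omega> 0 = 0
       \<and> (\<forall>z\<in>ball 0 1. g z = h (\<omega> z)))"

definition Bfun :: "complex \<Rightarrow> complex" where
  "Bfun z = csqrt (1 + tanh z)"

definition class_BT :: "(complex \<Rightarrow> complex) set" where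
  "class_BT = {f \<in> class_S. subordinate (deriv f) Bfun}"

definition coef :: "(complex \<Rightarrow> complex) \<Rightarrow> nat \<Rightarrow> complex" where
  "coef f n = (deriv ^^ n) f 0 / of_nat (fact n)"

definition Gamma1 :: "(complex \<Rightarrow> complex) \<Rightarrow> complex" where
  "Gamma1 f = - coef f 2 / 2"

definition Gamma2 :: "(complex \<Rightarrow> complex) \<Rightarrow> complex" where
  "Gamma2 f = - (coef f 3 - 3/2 * (coef f 2)^2) / 2"

end

(*
  If f' = B o w with a Schwarz function w(z) = c1 z + c2 z^2 + ..., then, since
  B(z) = 1 + z/2 - z^2/8 + ..., one finds a2 = c1/4 and a3 = c2/6 - c1^2/24, hence
  Gamma1 = -c1/8 and Gamma2 = 13 c1^2/192 - c2/12.  The Schwarz-Pick inequality applied to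
  w(z)/z gives |c2| <= 1 - |c1|^2, and both bounds follow from the triangle inequality and an
  elementary optimisation in |c1|.  Conversely every Schwarz function w arises: a primitive of
  B o w is univalent by the Noshiro-Warschawski theorem, because Re B > 0 on the disc.  The
  extremal functions come from w(z) = z^2 and w(z) = z (z + r) / (1 + r z) with r = 4 / sqrt 29.
*)
theory Submission
  imports Defs
begin

lemma one_plus_exp_notin_nonpos_Reals:
  fixes w :: complex
  assumes "\<bar>Im w\<bar> < pi"
  shows "1 + exp w \<notin> \<real>\<^sub>\<le>\<^sub>0"
proof
  assume "1 + exp w \<in> \<real>\<^sub>\<le>\<^sub>0"
  then have "sin (Im w) = 0" and re: "1 + Re (exp w) \<le> 0"
    by (auto simp: complex_nonpos_Reals_iff Im_exp)
  then have "Im w = 0"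
    using sin_zero_pi_iff assms by blast
  with re show False
    using exp_gt_zero[of "Re w"] by (simp add: Re_exp)
qed

lemma
  fixes z :: complex
  shows cosh_eq_exp_mult: "cosh z = exp z * (1 + exp (-2*z)) / 2"
    and sinh_eq_exp_mult: "sinh z = exp z * (1 - exp (-2*z)) / 2"
proof -
  have "exp (-z) = exp z * exp (-2*z)"
    by (simp flip: exp_add)
  then show "cosh z = exp z * (1 + exp (-2*z)) / 2" "sinh z = exp z * (1 - exp (-2*z)) / 2"
    by (simp_all add: cosh_field_def sinh_field_def algebra_simps)
qed

lemma
  fixes z :: complex
  assumes "\<bar>Im z\<bar> < pi/2"
  shows cosh_nonzero_strip: "cosh z \<noteq> 0"
    and one_plus_tanh_notin_nonpos_Reals: "1 + tanh z \<notin> \<real>\<^sub>\<le>\<^sub>0"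
proof -
  have q: "1 + exp (-2*z) \<notin> \<real>\<^sub>\<le>\<^sub>0"
    using assms by (intro one_plus_exp_notin_nonpos_Reals) simp
  then have q0: "1 + exp (-2*z) \<noteq> 0"
    by auto
  then show "cosh z \<noteq> 0"
    by (simp add: cosh_eq_exp_mult)
  have "tanh z = (1 - exp (-2*z)) / (1 + exp (-2*z))"
    by (simp add: tanh_def cosh_eq_exp_mult sinh_eq_exp_mult)
  then have "1 + tanh z = inverse (1 + exp (-2*z)) * of_nat 2"
    using q0 by (simp add: field_simps)
  with q show "1 + tanh z \<notin> \<real>\<^sub>\<le>\<^sub>0"
    by (simp only: nonpos_Reals_mult_of_nat_iff nonpos_Reals_inverse_iff) simp
qed

lemma Re_csqrt_pos:
  assumes "z \<notin> \<real>\<^sub>\<le>\<^sub>0"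
  shows "0 < Re (csqrt z)"
proof -
  have "\<bar>Re z\<bar> \<le> norm z"
    by (rule abs_Re_le_cmod)
  moreover have "norm z + Re z \<noteq> 0"
  proof
    assume "norm z + Re z = 0"
    then have "(Re z)^2 = (norm z)^2"
      by (simp add: eq_neg_iff_add_eq_0[symmetric])
    then have "Im z = 0"
      by (simp add: cmod_power2)
    with \<open>norm z + Re z = 0\<close> assms show False
      by (auto simp: complex_nonpos_Reals_iff cmod_eq_Re)
  qed
  ultimately show ?thesis
    by simp
qed

lemma deriv2_of_deriv_eq_comp:
  fixes f g w :: "complex \<Rightarrow> complex"
  assumes "open S" "z \<in> S" and w: "w analytic_on S" and g: "g analytic_on w ` S"
    and f': "\<And>x. x \<in> S \<Longrightarrow> deriv f x = g (w x)"
  shows "deriv (deriv f) z = deriv g (w z) * deriv w z"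
proof -
  have "\<forall>\<^sub>F x in nhds z. deriv f x = g (w x)"
    using eventually_nhds_in_open[OF \<open>open S\<close> \<open>z \<in> S\<close>] by (rule eventually_mono) (rule f')
  then have "deriv (deriv f) z = deriv (\<lambda>x. g (w x)) z"
    by (rule deriv_cong_ev) simp
  also have "\<dots> = deriv g (w z) * deriv w z"
    using w g \<open>z \<in> S\<close> by (intro deriv_compose_analytic) (auto intro: analytic_on_subset)
  finally show ?thesis .
qed

lemma deriv3_of_deriv_eq_comp:
  fixes f g w :: "complex \<Rightarrow> complex"
  assumes "open S" "z \<in> S" and w: "w analytic_on S" and g: "g analytic_on w ` S"
    and f': "\<And>x. x \<in> S \<Longrightarrow> deriv f x = g (w x)"
  shows "deriv (deriv (deriv f)) z
           = deriv (deriv g) (w z) * (deriv w z)^2 + deriv g (w z) * deriv (deriv w) z"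
proof -
  have wa: "w analytic_on {z}" "deriv w analytic_on {z}"
    and ga: "g analytic_on {w z}" "deriv g analytic_on {w z}"
    using w g \<open>z \<in> S\<close> by (auto intro: analytic_on_subset analytic_deriv)
  have "\<forall>\<^sub>F x in nhds z. deriv (deriv f) x = deriv g (w x) * deriv w x"
    using eventually_nhds_in_open[OF \<open>open S\<close> \<open>z \<in> S\<close>]
    by (rule eventually_mono) (rule deriv2_of_deriv_eq_comp[OF \<open>open S\<close> _ w g f'])
  then have "deriv (deriv (deriv f)) z = deriv (\<lambda>x. deriv g (w x) * deriv w x) z"
    by (rule deriv_cong_ev) simp
  also have "\<dots> = deriv g (w z) * deriv (deriv w) z + deriv (\<lambda>x. deriv g (w x)) z * deriv w z"
    using wa ga
    by (intro deriv_mult analytic_on_imp_differentiable_at[of _ "{z}"])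
       (auto simp: analytic_on_compose[unfolded o_def])
  also have "deriv (\<lambda>x. deriv g (w x)) z = deriv (deriv g) (w z) * deriv w z"
    using wa ga by (intro deriv_compose_analytic)
  finally show ?thesis
    by (simp add: power2_eq_square algebra_simps)
qed

lemma derivs_0_of_eq_mult_id:
  fixes h w :: "complex \<Rightarrow> complex"
  assumes "open S" "0 \<in> S" and h: "h holomorphic_on S" and w: "\<And>z. z \<in> S \<Longrightarrow> w z = z * h z"
  shows "deriv w 0 = h 0" and "deriv (deriv w) 0 = 2 * deriv h 0"
proof -
  have "h analytic_on S"
    using h \<open>open S\<close> by (simp add: analytic_on_open)
  then have ha: "h analytic_on {x}" "deriv h analytic_on {x}" if "x \<in> S" for x
    using that by (auto intro: analytic_on_subset analytic_deriv)
  have w': "deriv w x = h x + x * deriv h x" if "x \<in> S" for x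
  proof -
    have "deriv w x = deriv (\<lambda>y. y * h y) x"
      using eventually_nhds_in_open[OF \<open>open S\<close> that] by (intro deriv_cong_ev) (auto elim: eventually_mono simp: w)
    also have "\<dots> = h x + x * deriv h x"
      using ha[OF that] by (simp add: analytic_on_imp_differentiable_at)
    finally show ?thesis .
  qed
  then show "deriv w 0 = h 0"
    using \<open>0 \<in> S\<close> by simp
  have "deriv (deriv w) 0 = deriv (\<lambda>x. h x + x * deriv h x) 0"
    using eventually_nhds_in_open[OF \<open>open S\<close> \<open>0 \<in> S\<close>]
    by (intro deriv_cong_ev) (auto elim: eventually_mono simp: w')
  also have "\<dots> = 2 * deriv h 0"
  proof (rule DERIV_imp_deriv)
    have "(h has_field_derivative deriv h 0) (at 0)"
      "(deriv h has_field_derivative deriv (deriv h) 0) (at 0)"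
      using ha[OF \<open>0 \<in> S\<close>] by (auto intro: field_differentiable_derivI analytic_on_imp_differentiable_at)
    then show "((\<lambda>x. h x + x * deriv h x) has_field_derivative 2 * deriv h 0) (at 0)"
      by (auto intro!: derivative_eq_intros)
  qed
  finally show "deriv (deriv w) 0 = 2 * deriv h 0" .
qed

lemma has_field_derivative_Moebius_function_simple:
  assumes "cnj c * z \<noteq> 1"
  shows "(Moebius_function 0 c has_field_derivative (1 - cnj c * c) / (1 - cnj c * z)^2) (at z)"
  unfolding Moebius_function_simple[abs_def] using assms
  by (auto intro!: derivative_eq_intros simp: power2_eq_square field_simps)

lemma Schwarz_Pick_deriv_0:
  assumes h: "h holomorphic_on ball 0 1" and h_ball: "h ` ball 0 1 \<subseteq> ball 0 1"
  shows "norm (deriv h 0) \<le> 1 - (norm (h 0))^2"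
proof -
  define c where "c = h 0"
  have c: "norm c < 1"
    using h_ball by (auto simp: c_def image_subset_iff)
  have cc: "cnj c * c = of_real ((norm c)^2)"
    by (metis complex_norm_square mult.commute)
  have c2: "(norm c)^2 < 1"
    using c by (simp add: abs_square_less_1)
  define k where "k = Moebius_function 0 c \<circ> h"
  have "k holomorphic_on ball 0 1"
    unfolding k_def by (rule holomorphic_on_compose_gen[OF h Moebius_function_holomorphic[OF c] h_ball])
  moreover have "k 0 = 0"
    by (simp add: k_def c_def Moebius_function_eq_zero)
  moreover have "norm (k z) < 1" if "norm z < 1" for z
    using h_ball that c by (auto simp: k_def image_subset_iff intro!: Moebius_function_norm_lt_1)
  ultimately have "norm (deriv k 0) \<le> 1"
    using Schwarz_Lemma(2)[of k 0] by simp
  moreover have "deriv k 0 = deriv h 0 / of_real (1 - (norm c)^2)"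
  proof -
    have one_minus: "1 - cnj c * c = of_real (1 - (norm c)^2)"
      by (simp add: cc)
    then have ne: "1 - cnj c * c \<noteq> 0"
      using c2 by (simp only: of_real_eq_0_iff)
    then have "(k has_field_derivative (1 - cnj c * c) / (1 - cnj c * c)^2 * deriv h 0) (at 0)"
      unfolding k_def c_def
      by (intro DERIV_chain has_field_derivative_Moebius_function_simple holomorphic_derivI[OF h]) auto
    then have "deriv k 0 = deriv h 0 / (1 - cnj c * c)"
      using ne by (auto dest!: DERIV_imp_deriv simp: power2_eq_square)
    then show ?thesis
      by (simp only: one_minus)
  qed
  ultimately have "norm (deriv h 0) / (1 - (norm c)^2) \<le> 1"
    using c2 by (metis norm_divide norm_of_real abs_of_pos diff_gt_0_iff_gt)
  then show ?thesis
    using c2 by (simp add: c_def divide_le_eq)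
qed

lemma Noshiro_Warschawski:
  assumes "convex S" and f': "\<And>z. z \<in> S \<Longrightarrow> (f has_field_derivative f' z) (at z)"
    and pos: "\<And>z. z \<in> S \<Longrightarrow> 0 < Re (f' z)"
  shows "inj_on f S"
proof (rule inj_onI, rule ccontr)
  fix a b assume "a \<in> S" "b \<in> S" "f a = f b" "a \<noteq> b"
  have seg: "closed_segment a b \<subseteq> S"
    using \<open>convex S\<close> \<open>a \<in> S\<close> \<open>b \<in> S\<close> by (simp add: closed_segment_subset)
  obtain u where u: "u \<in> closed_segment a b"
    and mvt: "Re (f b * cnj (b - a)) - Re (f a * cnj (b - a)) = Re (f' u * cnj (b - a) * (b - a))"
    using complex_mvt_line[of a b "\<lambda>z. f z * cnj (b - a)" "\<lambda>z. f' z * cnj (b - a)"]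
      seg f' DERIV_cmult_right by blast
  have "cnj (b - a) * (b - a) = of_real ((norm (b - a))^2)"
    by (metis complex_norm_square mult.commute)
  then have "Re (f' u * cnj (b - a) * (b - a)) = Re (f' u) * (norm (b - a))^2"
    by (simp add: mult.assoc)
  also have "\<dots> > 0"
    using pos u seg \<open>a \<noteq> b\<close> by auto
  finally show False
    using mvt \<open>f a = f b\<close> by simp
qed

definition Schwarz_function :: "(complex \<Rightarrow> complex) \<Rightarrow> bool" where
  "Schwarz_function w \<longleftrightarrow> w holomorphic_on ball 0 1 \<and> w ` ball 0 1 \<subseteq> ball 0 1 \<and> w 0 = 0"

lemma subordinate_iff_Schwarz_function:
  "subordinate g h \<longleftrightarrow> (\<exists>w. Schwarz_function w \<and> (\<forall>z\<in>ball 0 1. g z = h (w z)))"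
  by (auto simp: subordinate_def Schwarz_function_def)

lemma Schwarz_function_mult_id:
  assumes "h holomorphic_on ball 0 1" "h ` ball 0 1 \<subseteq> ball 0 1"
  shows "Schwarz_function (\<lambda>z. z * h z)"
proof -
  have "norm (z * h z) < 1" if "norm z < 1" for z
    using assms(2) that norm_mult_less[of z 1 "h z" 1] by (auto simp: image_subset_iff)
  with assms(1) show ?thesis
    by (auto simp: Schwarz_function_def intro!: holomorphic_intros)
qed

lemma Schwarz_function_deriv2_bound:
  assumes "Schwarz_function w"
  shows "norm (deriv (deriv w) 0 / 2) \<le> 1 - (norm (deriv w 0))^2"
proof -
  have w: "w holomorphic_on ball 0 1" and [simp]: "w 0 = 0"
    and w_ball: "\<And>z. norm z < 1 \<Longrightarrow> norm (w z) < 1"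
    using assms by (auto simp: Schwarz_function_def image_subset_iff)
  obtain h where h: "h holomorphic_on ball 0 1" and w_eq: "\<And>z. norm z < 1 \<Longrightarrow> w z = z * h z"
    by (rule Schwarz3[OF w]) auto
  have w_derivs: "deriv w 0 = h 0" "deriv (deriv w) 0 = 2 * deriv h 0"
    using derivs_0_of_eq_mult_id[OF open_ball _ h] w_eq by auto
  (* Either w is a rotation, or h = w(z)/z maps the disc into itself and Schwarz-Pick applies. *)
  show ?thesis
  proof (cases "(\<exists>z. norm z < 1 \<and> z \<noteq> 0 \<and> norm (w z) = norm z) \<or> norm (deriv w 0) = 1")
    case True
    then obtain \<alpha> where \<alpha>: "\<And>z. norm z < 1 \<Longrightarrow> w z = \<alpha> * z" "norm \<alpha> = 1"
      using Schwarz_Lemma(3)[OF w _ w_ball, of 0] by auto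
    then have "deriv w 0 = \<alpha>" "deriv (deriv w) 0 = 0"
      using derivs_0_of_eq_mult_id[of "ball 0 1" "\<lambda>_. \<alpha>" w] by (auto simp: mult.commute)
    with \<alpha> show ?thesis
      by simp
  next
    case False
    then have no_rotation: "norm (deriv w 0) \<noteq> 1" "\<And>z. norm z < 1 \<Longrightarrow> z \<noteq> 0 \<Longrightarrow> norm (w z) \<noteq> norm z"
      by auto
    have "norm (h z) < 1" if "norm z < 1" for z
    proof (cases "z = 0")
      case True
      with no_rotation show ?thesis
        using Schwarz_Lemma(2)[OF w _ w_ball, of 0] w_derivs by auto
    next
      case False
      then have "norm (w z) < norm z"
        using no_rotation(2) Schwarz_Lemma(1)[OF w _ w_ball that] that by fastforce
      with False show ?thesis
        using that by (simp add: w_eq norm_mult)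
    qed
    with h have "norm (deriv h 0) \<le> 1 - (norm (h 0))^2"
      by (intro Schwarz_Pick_deriv_0) auto
    with w_derivs show ?thesis
      by (simp add: norm_mult)
  qed
qed

lemma abs_Im_less_pi_half:
  fixes z :: complex
  assumes "norm z < 1"
  shows "\<bar>Im z\<bar> < pi/2"
  using abs_Im_le_cmod[of z] assms pi_gt3 by linarith

lemma has_field_derivative_Bfun:
  assumes "\<bar>Im z\<bar> < pi/2"
  shows "(Bfun has_field_derivative (1 - tanh z ^ 2) / (2 * Bfun z)) (at z)"
  unfolding Bfun_def[abs_def]
  using cosh_nonzero_strip[OF assms] one_plus_tanh_notin_nonpos_Reals[OF assms]
  by (auto intro!: derivative_eq_intros)

lemma Re_Bfun_pos: "\<bar>Im z\<bar> < pi/2 \<Longrightarrow> 0 < Re (Bfun z)"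
  unfolding Bfun_def by (intro Re_csqrt_pos one_plus_tanh_notin_nonpos_Reals)

lemma Bfun_0 [simp]: "Bfun 0 = 1"
  by (simp add: Bfun_def)

lemma Bfun_holomorphic: "Bfun holomorphic_on ball 0 1"
  unfolding holomorphic_on_def field_differentiable_def
  using has_field_derivative_Bfun abs_Im_less_pi_half has_field_derivative_at_within by fastforce

lemma Bfun_analytic: "Bfun analytic_on ball 0 1"
  by (simp add: analytic_on_open Bfun_holomorphic)

lemma deriv_Bfun_0: "deriv Bfun 0 = 1/2"
  using has_field_derivative_Bfun[of 0] by (simp add: DERIV_imp_deriv)

lemma deriv2_Bfun_0: "deriv (deriv Bfun) 0 = -1/4"
proof -
  have "\<forall>\<^sub>F z in nhds 0. deriv Bfun z = (1 - tanh z ^ 2) / (2 * Bfun z)"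
    using eventually_nhds_in_open[of "ball 0 1" 0]
    by (rule eventually_mono) (auto intro: DERIV_imp_deriv has_field_derivative_Bfun abs_Im_less_pi_half)
  moreover have "((\<lambda>z. (1 - tanh z ^ 2) / (2 * Bfun z)) has_field_derivative -1/4) (at 0)"
    using has_field_derivative_Bfun[of 0] by (auto intro!: derivative_eq_intros)
  ultimately show ?thesis
    using deriv_cong_ev DERIV_imp_deriv by fastforce
qed

lemma class_BT_of_Schwarz_function:
  assumes "Schwarz_function w"
  obtains f where "f \<in> class_BT" and "\<And>z. z \<in> ball 0 1 \<Longrightarrow> deriv f z = Bfun (w z)"
proof -
  have w: "w holomorphic_on ball 0 1" and w_ball: "w ` ball 0 1 \<subseteq> ball 0 1" and "w 0 = 0"
    using assms by (auto simp: Schwarz_function_def)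
  have "(Bfun \<circ> w) holomorphic_on ball 0 1"
    by (rule holomorphic_on_compose_gen[OF w Bfun_holomorphic w_ball])
  then obtain g where g: "\<And>z. z \<in> ball 0 1 \<Longrightarrow> (g has_field_derivative (Bfun \<circ> w) z) (at z within ball 0 1)"
    using holomorphic_convex_primitive'[OF convex_ball open_ball] by blast
  define f where "f z = g z - g 0" for z
  have f': "(f has_field_derivative Bfun (w z)) (at z)" if "z \<in> ball 0 1" for z
    using g[OF that] at_within_open[OF that open_ball] unfolding f_def[abs_def]
    by (auto intro!: derivative_eq_intros)
  then have deriv_f: "deriv f z = Bfun (w z)" if "z \<in> ball 0 1" for z
    using that by (simp add: DERIV_imp_deriv)
  have "f holomorphic_on ball 0 1"
    unfolding holomorphic_on_def field_differentiable_def
    using f' has_field_derivative_at_within by blast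
  moreover have "inj_on f (ball 0 1)"
    using w_ball
    by (intro Noshiro_Warschawski[OF convex_ball f'] Re_Bfun_pos abs_Im_less_pi_half) (auto simp: image_subset_iff)
  ultimately have "f \<in> class_S"
    using deriv_f[of 0] \<open>w 0 = 0\<close> by (simp add: class_S_def f_def)
  moreover have "subordinate (deriv f) Bfun"
    using assms deriv_f by (auto simp: subordinate_iff_Schwarz_function)
  ultimately show ?thesis
    using that deriv_f by (simp add: class_BT_def)
qed

lemma Gamma_eq_of_deriv_eq_Bfun_comp:
  assumes "Schwarz_function w" and f': "\<And>z. z \<in> ball 0 1 \<Longrightarrow> deriv f z = Bfun (w z)"
  shows "Gamma1 f = - deriv w 0 / 8"
    and "Gamma2 f = 13/192 * (deriv w 0)^2 - deriv (deriv w) 0 / 24"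
proof -
  have w: "w holomorphic_on ball 0 1" "w ` ball 0 1 \<subseteq> ball 0 1" "w 0 = 0"
    using assms(1) by (auto simp: Schwarz_function_def)
  have "w analytic_on ball 0 1" "Bfun analytic_on w ` ball 0 1"
    using w(1) analytic_on_subset[OF Bfun_analytic w(2)] by (simp_all add: analytic_on_open)
  note derivs = deriv2_of_deriv_eq_comp[OF open_ball _ this f', of 0]
    deriv3_of_deriv_eq_comp[OF open_ball _ this f', of 0]
  have c2: "coef f 2 = deriv w 0 / 4"
    using derivs(1) by (simp add: coef_def numeral_2_eq_2 w(3) deriv_Bfun_0 field_simps)
  have c3: "coef f 3 = deriv (deriv w) 0 / 12 - (deriv w 0)^2 / 24"
    using derivs(2) by (simp add: coef_def numeral_3_eq_3 w(3) deriv_Bfun_0 deriv2_Bfun_0 fact_numeral)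
  show "Gamma1 f = - deriv w 0 / 8"
    by (simp add: Gamma1_def c2)
  show "Gamma2 f = 13/192 * (deriv w 0)^2 - deriv (deriv w) 0 / 24"
    by (simp add: Gamma2_def c2 c3 power2_eq_square field_simps)
qed

lemma class_BT_Gamma_Schwarz_representation:
  assumes "f \<in> class_BT"
  obtains w where "Schwarz_function w" "Gamma1 f = - deriv w 0 / 8"
    "Gamma2 f = 13/192 * (deriv w 0)^2 - deriv (deriv w) 0 / 24"
proof -
  obtain w where "Schwarz_function w" "\<forall>z\<in>ball 0 1. deriv f z = Bfun (w z)"
    using assms by (auto simp: class_BT_def subordinate_iff_Schwarz_function)
  with Gamma_eq_of_deriv_eq_Bfun_comp[of w f] that show ?thesis
    by blast
qed

lemma class_BT_Gamma_of_mult_id: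
  assumes h: "h holomorphic_on ball 0 1" "h ` ball 0 1 \<subseteq> ball 0 1"
  shows "\<exists>f\<in>class_BT. Gamma1 f = - h 0 / 8 \<and> Gamma2 f = 13/192 * (h 0)^2 - deriv h 0 / 12"
proof -
  define w where "w z = z * h z" for z
  have "Schwarz_function w"
    unfolding w_def[abs_def] using h by (rule Schwarz_function_mult_id)
  then obtain f where "f \<in> class_BT" "\<And>z. z \<in> ball 0 1 \<Longrightarrow> deriv f z = Bfun (w z)"
    using class_BT_of_Schwarz_function by blast
  moreover have "deriv w 0 = h 0" "deriv (deriv w) 0 = 2 * deriv h 0"
    using derivs_0_of_eq_mult_id[OF open_ball _ h(1)] by (auto simp: w_def)
  ultimately show ?thesis
    using Gamma_eq_of_deriv_eq_Bfun_comp[OF \<open>Schwarz_function w\<close>] by auto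
qed

lemma max_quadratic_minus_linear_lower_bound:
  fixes x :: real
  assumes "0 \<le> x"
  shows "- 1 / (2 * sqrt 29) \<le> max 0 ((29 * x^2 - 16) / 192) - x / 8"
proof -
  define s where "s = sqrt 29"
  have s: "5 < s" "s * s = 29"
    unfolding s_def by (auto intro: real_less_rsqrt)
  show ?thesis
  proof (cases "s * x \<le> 4")
    case True
    then have "x / 8 \<le> 1 / (2 * s)"
      using s by (simp add: field_simps)
    then show ?thesis
      by (simp add: s_def)
  next
    case False
    have "8 * 5 < (s * x + 4) * s"
      using False s by (intro mult_strict_mono) auto
    then have "0 < (s * x - 4) * ((s * x + 4) * s - 24) / (192 * s)"
      using False s by (intro divide_pos_pos mult_pos_pos) auto
    also have "\<dots> = (29 * x^2 - 16) / 192 - x / 8 + 1 / (2 * s)"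
      using s by (simp add: field_simps power2_eq_square)
    finally show ?thesis
      by (simp add: s_def)
  qed
qed

lemma Gamma_difference_bounds:
  fixes c1 c2 :: complex
  assumes "norm c2 \<le> 1 - (norm c1)^2"
  shows "- 1 / (2 * sqrt 29) \<le> norm (13/192 * c1^2 - c2/12) - norm (c1/8)"
    and "norm (13/192 * c1^2 - c2/12) - norm (c1/8) \<le> 1/12"
proof -
  define x where "x = norm c1"
  have x: "0 \<le> x" "norm (c1/8) = x/8"
    by (simp_all add: x_def norm_divide)
  have n1: "norm (13/192 * c1^2) = 13/192 * x^2"
    by (simp add: x_def norm_mult norm_power)
  have n2: "norm (c2/12) \<le> (1 - x^2)/12"
    using assms by (simp add: x_def norm_divide)
  have "norm (13/192 * c1^2 - c2/12) \<le> 13/192 * x^2 + (1 - x^2)/12"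
    using norm_triangle_ineq4[of "13/192 * c1^2" "c2/12"] n1 n2 by linarith
  moreover have "13/192 * x^2 + (1 - x^2)/12 \<le> 1/12 + x/8"
    using x by (simp add: field_simps)
  ultimately show "norm (13/192 * c1^2 - c2/12) - norm (c1/8) \<le> 1/12"
    using x by linarith
  have "(29 * x^2 - 16) / 192 \<le> norm (13/192 * c1^2 - c2/12)"
    using norm_triangle_ineq2[of "13/192 * c1^2" "c2/12"] n1 n2 by (simp add: field_simps)
  then have "max 0 ((29 * x^2 - 16) / 192) - x/8 \<le> norm (13/192 * c1^2 - c2/12) - norm (c1/8)"
    using x by simp
  then show "- 1 / (2 * sqrt 29) \<le> norm (13/192 * c1^2 - c2/12) - norm (c1/8)"
    using max_quadratic_minus_linear_lower_bound[OF x(1)] by linarith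
qed

lemma class_BT_extremal_upper: "\<exists>f\<in>class_BT. Gamma1 f = 0 \<and> Gamma2 f = - 1 / 12"
  using class_BT_Gamma_of_mult_id[of "\<lambda>z. z"] by simp

lemma class_BT_extremal_lower:
  "\<exists>f\<in>class_BT. Gamma1 f = - of_real (1 / (2 * sqrt 29)) \<and> Gamma2 f = 0"
proof -
  (* 29 r^2 = 16 is where the lower bound (29 |c1|^2 - 16)/192 for |Gamma2| reaches 0. *)
  define r where "r = 4 / sqrt 29"
  have "4 < sqrt 29"
    by (rule real_less_rsqrt) simp
  then have r: "0 < r" "r < 1" "r^2 = 16 / 29" "r / 8 = 1 / (2 * sqrt 29)"
    by (simp_all add: r_def power_divide)
  define h where "h = Moebius_function 0 (- of_real r)"
  have "norm (- of_real r :: complex) < 1"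
    using r(1,2) by simp
  then have "h holomorphic_on ball 0 1" "h ` ball 0 1 \<subseteq> ball 0 1"
    unfolding h_def using Moebius_function_holomorphic Moebius_function_norm_lt_1 by auto
  moreover have "h 0 = of_real r" "deriv h 0 = of_real (1 - r^2)"
    using has_field_derivative_Moebius_function_simple[of "- of_real r" 0]
    by (auto simp: h_def Moebius_function_of_zero power2_eq_square DERIV_imp_deriv)
  ultimately show ?thesis
    using class_BT_Gamma_of_mult_id[of h] r by (auto simp flip: of_real_power)
qed

theorem theorem7p2:
  shows "(\<forall>f\<in>class_BT. - 1 / (2 * sqrt 29) \<le> cmod (Gamma2 f) - cmod (Gamma1 f)
                      \<and> cmod (Gamma2 f) - cmod (Gamma1 f) \<le> 1 / 12)
       \<and> (\<exists>f\<in>class_BT. cmod (Gamma2 f) - cmod (Gamma1 f) = 1 / 12)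
       \<and> (\<exists>f\<in>class_BT. cmod (Gamma2 f) - cmod (Gamma1 f) = - 1 / (2 * sqrt 29))"
proof (intro conjI ballI)
  fix f assume "f \<in> class_BT"
  then obtain w where "Schwarz_function w" "Gamma1 f = - deriv w 0 / 8"
    "Gamma2 f = 13/192 * (deriv w 0)^2 - deriv (deriv w) 0 / 24"
    by (rule class_BT_Gamma_Schwarz_representation)
  with Gamma_difference_bounds[OF Schwarz_function_deriv2_bound]
  show "- 1 / (2 * sqrt 29) \<le> cmod (Gamma2 f) - cmod (Gamma1 f)"
    and "cmod (Gamma2 f) - cmod (Gamma1 f) \<le> 1 / 12"
    by (simp_all add: norm_divide)
next
  obtain f where "f \<in> class_BT" "Gamma1 f = 0" "Gamma2 f = - 1 / 12"
    using class_BT_extremal_upper by blast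
  then show "\<exists>f\<in>class_BT. cmod (Gamma2 f) - cmod (Gamma1 f) = 1 / 12"
    by (intro bexI[of _ f]) simp_all
next
  obtain f where "f \<in> class_BT" "Gamma1 f = - of_real (1 / (2 * sqrt 29))" "Gamma2 f = 0"
    using class_BT_extremal_lower by blast
  then show "\<exists>f\<in>class_BT. cmod (Gamma2 f) - cmod (Gamma1 f) = - 1 / (2 * sqrt 29)"
    by (intro bexI[of _ f]) (simp_all add: norm_divide)
qed

end
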